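(* Let $T$ be a $C_{p^rq^s}$-transfer system with exactly two connected components. If the connected component of $(0,0)$ equals $H_k$ for some $0<k<s$, or equals $V_\ell$ for some $0<\ell<r$, then $T$ is not lesser simply paired.
   Context: $p,q$ are distinct primes and $r,s\ge 0$ integers. The subgroups of $C_{p^rq^s}$ are identified with grid points $(i,j)$, $0\le i\le r$, $0\le j\le s$, where $(i,j)$ stands for $C_{p^iq^j}$ (intersection is coordinatewise minimum). A $C_{p^rq^s}$-transfer system is a partial order $\to$ on these vertices such that: $(i_1,j_1)\to(i_2,j_2)$ implies $i_1\le i_2$, $j_1\le j_2$; it is reflexive and transitive; and $(i_1,j_1)\to(i_2,j_2)$ implies $(\min\{i_1,a\},\min\{j_1,b\})\to(\min\{i_2,a\},\min\{j_2,b\})$ for every vertex $(a,b)$. Connected components are those of the underlying undirected graph. $V_\ell=\{(i,j): 0\le i\le \ell,\ 0\le j\le s\}$, $H_k=\{(i,j): 0\le i\le r,\ 0\le j\le k\}$. A transfer system is saturated if whenever $L\le K\le H$ and $L\to H$ is in it then $K\to H$ is in it; $\mathrm{Hull}(T)$ is the smallest saturated transfer system containing $T$; $T_c$ is the complete transfer system. A pair $(T,T')$ is compatible if $T\subseteq T'$ and for all subgroups $A,B,C$ with $B,C\le A$: if $B\to A$ is in $T$ and $B\cap C\to B$ is in $T'$ then $C\to A$ is in $T'$. $T$ is lesser simply paired if for every transfer system $T'\supseteq T$, $(T,T')$ is compatible iff $T'\in\{\mathrm{Hull}(T),T_c\}$. *)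

theory Defs
  imports Main
begin

text \<open>Subgroups of C_{p^r q^s} are modelled by grid points (i,j) with i \<le> r, j \<le> s;
 (i,j) stands for C_{p^i q^j}. Inclusion is coordinatewise order, intersection is
 coordinatewise minimum.\<close>

type_synonym vtx = "nat \<times> nat"

definition verts :: "nat \<Rightarrow> nat \<Rightarrow> vtx set" where
  "verts r s = {(i, j). i \<le> r \<and> j \<le> s}"

definition sub :: "vtx \<Rightarrow> vtx \<Rightarrow> bool" where
  "sub x y \<longleftrightarrow> fst x \<le> fst y \<and> snd x \<le> snd y"

definition meet :: "vtx \<Rightarrow> vtx \<Rightarrow> vtx" where
  "meet x y = (min (fst x) (fst y), min (snd x) (snd y))"

definition transfer_system :: "nat \<Rightarrow> nat \<Rightarrow> vtx rel \<Rightarrow> bool" where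
  "transfer_system r s T \<longleftrightarrow>
     T \<subseteq> verts r s \<times> verts r s \<and>
     (\<forall>(x, y) \<in> T. sub x y) \<and>
     (\<forall>x \<in> verts r s. (x, x) \<in> T) \<and>
     trans T \<and>
     (\<forall>(x, y) \<in> T. \<forall>v \<in> verts r s. (meet x v, meet y v) \<in> T)"

definition saturated :: "nat \<Rightarrow> nat \<Rightarrow> vtx rel \<Rightarrow> bool" where
  "saturated r s T \<longleftrightarrow>
     (\<forall>L \<in> verts r s. \<forall>K \<in> verts r s. \<forall>H \<in> verts r s.
        sub L K \<and> sub K H \<and> (L, H) \<in> T \<longrightarrow> (K, H) \<in> T)"

definition Hull :: "nat \<Rightarrow> nat \<Rightarrow> vtx rel \<Rightarrow> vtx rel" where
  "Hull r s T = \<Inter>{T'. transfer_system r s T' \<and> saturated r s T' \<and> T \<subseteq> T'}"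

definition complete_ts :: "nat \<Rightarrow> nat \<Rightarrow> vtx rel" where
  "complete_ts r s = {(x, y). x \<in> verts r s \<and> y \<in> verts r s \<and> sub x y}"

definition compatible :: "nat \<Rightarrow> nat \<Rightarrow> vtx rel \<Rightarrow> vtx rel \<Rightarrow> bool" where
  "compatible r s T T' \<longleftrightarrow> T \<subseteq> T' \<and>
     (\<forall>A \<in> verts r s. \<forall>B \<in> verts r s. \<forall>C \<in> verts r s.
        sub B A \<and> sub C A \<and> (B, A) \<in> T \<and> (meet B C, B) \<in> T' \<longrightarrow> (C, A) \<in> T')"

definition lesser_simply_paired :: "nat \<Rightarrow> nat \<Rightarrow> vtx rel \<Rightarrow> bool" where
  "lesser_simply_paired r s T \<longleftrightarrow>
     (\<forall>T'. transfer_system r s T' \<and> T \<subseteq> T' \<longrightarrow>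
        (compatible r s T T' \<longleftrightarrow> (T' = Hull r s T \<or> T' = complete_ts r s)))"

definition component :: "nat \<Rightarrow> nat \<Rightarrow> vtx rel \<Rightarrow> vtx \<Rightarrow> vtx set" where
  "component r s T x = {y \<in> verts r s. (x, y) \<in> (T \<union> T\<inverse>)\<^sup>*}"

definition components :: "nat \<Rightarrow> nat \<Rightarrow> vtx rel \<Rightarrow> vtx set set" where
  "components r s T = component r s T ` verts r s"

definition Hset :: "nat \<Rightarrow> nat \<Rightarrow> vtx set" where
  "Hset r k = {(i, j). i \<le> r \<and> j \<le> k}"

definition Vset :: "nat \<Rightarrow> nat \<Rightarrow> vtx set" where
  "Vset l s = {(i, j). i \<le> l \<and> j \<le> s}"

end

theory Submission
  imports Defs
begin

text \<open>If the component of the bottom vertex is the down-set \<open>g x \<le> k\<close> of a coordinate \<open>g\<close>, then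
  \<open>T\<close> only has arrows that stay on one side of this threshold. The transfer system of all such
  arrows is saturated, so it contains \<open>Hull T\<close>. Adding the arrows that leave the threshold from
  vertices with \<open>g x = 0\<close> gives a transfer system compatible with \<open>T\<close> that lies strictly between
  \<open>Hull T\<close> and the complete one: it has an arrow crossing the threshold, but none starting at a
  vertex with \<open>0 < g x \<le> k\<close>.\<close>

lemma sub_meet_eq: "sub x y \<Longrightarrow> meet x y = x"
  by (cases x, cases y) (simp add: sub_def meet_def)

lemma sub_refl [simp]: "sub x x"
  by (simp add: sub_def)

lemma sub_trans: "sub x y \<Longrightarrow> sub y z \<Longrightarrow> sub x z"
  by (auto simp: sub_def)

lemma sub_meet_mono: "sub x y \<Longrightarrow> sub (meet x v) (meet y v)"
  by (auto simp: sub_def meet_def)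

lemma meet_in_verts: "x \<in> verts r s \<Longrightarrow> meet x v \<in> verts r s"
  by (auto simp: verts_def meet_def)

lemma component_closed_arrow:
  assumes "transfer_system r s T" and "(x, y) \<in> T" and "x \<in> component r s T z"
  shows "y \<in> component r s T z"
proof -
  have "y \<in> verts r s" using assms(1,2) unfolding transfer_system_def by blast
  moreover have "(z, y) \<in> (T \<union> T\<inverse>)\<^sup>*"
    using assms(2,3) unfolding component_def by (blast intro: rtrancl_into_rtrancl)
  ultimately show ?thesis unfolding component_def by blast
qed

lemma Hull_least:
  "transfer_system r s T' \<Longrightarrow> saturated r s T' \<Longrightarrow> T \<subseteq> T' \<Longrightarrow> Hull r s T \<subseteq> T'"
  unfolding Hull_def by blast

definition threshold_ts :: "nat \<Rightarrow> nat \<Rightarrow> (vtx \<Rightarrow> nat) \<Rightarrow> nat \<Rightarrow> vtx rel" where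
  "threshold_ts r s g k = {(x, y). x \<in> verts r s \<and> y \<in> verts r s \<and> sub x y \<and> (g x \<le> k \<longleftrightarrow> g y \<le> k)}"

definition threshold_ts_from_bottom :: "nat \<Rightarrow> nat \<Rightarrow> (vtx \<Rightarrow> nat) \<Rightarrow> nat \<Rightarrow> vtx rel" where
  "threshold_ts_from_bottom r s g k = {(x, y). x \<in> verts r s \<and> y \<in> verts r s \<and> sub x y \<and>
     (g x \<le> k \<and> \<not> g y \<le> k \<longrightarrow> g x = 0)}"

context
  fixes g :: "vtx \<Rightarrow> nat"
  assumes g_meet: "\<And>x y. g (meet x y) = min (g x) (g y)"
begin

lemma g_mono: "sub x y \<Longrightarrow> g x \<le> g y"
  using g_meet[of x y] by (simp add: sub_meet_eq)

lemma transfer_system_threshold_ts: "transfer_system r s (threshold_ts r s g k)"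
  unfolding transfer_system_def threshold_ts_def trans_def
  by (auto simp: g_meet meet_in_verts sub_meet_mono intro: sub_trans)

lemma saturated_threshold_ts: "saturated r s (threshold_ts r s g k)"
  unfolding saturated_def threshold_ts_def
  by (auto dest!: g_mono)

lemma subset_threshold_ts:
  assumes ts: "transfer_system r s T"
    and comp: "component r s T z = {x \<in> verts r s. g x \<le> k}"
  shows "T \<subseteq> threshold_ts r s g k"
proof safe
  fix x y assume xy: "(x, y) \<in> T"
  then have v: "x \<in> verts r s" "y \<in> verts r s" and "sub x y"
    using ts unfolding transfer_system_def by blast+
  moreover from \<open>sub x y\<close> have "g x \<le> g y" by (rule g_mono)
  moreover have "g y \<le> k" if "g x \<le> k"
    using component_closed_arrow[OF ts xy, of z] comp v that by blast
  ultimately show "(x, y) \<in> threshold_ts r s g k"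
    using v \<open>sub x y\<close> unfolding threshold_ts_def by auto
qed

lemma transfer_system_threshold_ts_from_bottom:
  "transfer_system r s (threshold_ts_from_bottom r s g k)"
  unfolding transfer_system_def threshold_ts_from_bottom_def trans_def
  by (auto simp: g_meet meet_in_verts sub_meet_mono intro: sub_trans dest: g_mono)

lemma compatible_threshold_ts_from_bottom:
  assumes "T \<subseteq> threshold_ts r s g k"
  shows "compatible r s T (threshold_ts_from_bottom r s g k)"
  using assms
  unfolding compatible_def threshold_ts_def threshold_ts_from_bottom_def
  by (fastforce simp: g_meet)

lemma not_lesser_simply_paired_if_component_threshold:
  assumes ts: "transfer_system r s T"
    and comp: "component r s T z = {x \<in> verts r s. g x \<le> k}"
    and v: "x\<^sub>0 \<in> verts r s" "x\<^sub>1 \<in> verts r s" "y \<in> verts r s"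
    and sub: "sub x\<^sub>0 y" "sub x\<^sub>1 y"
    and g: "g x\<^sub>0 = 0" "0 < g x\<^sub>1" "g x\<^sub>1 \<le> k" "k < g y"
  shows "\<not> lesser_simply_paired r s T"
proof -
  let ?T\<^sub>1 = "threshold_ts r s g k" and ?T\<^sub>2 = "threshold_ts_from_bottom r s g k"
  have "T \<subseteq> ?T\<^sub>1" using ts comp by (rule subset_threshold_ts)
  then have compat: "compatible r s T ?T\<^sub>2" by (rule compatible_threshold_ts_from_bottom)
  then have "T \<subseteq> ?T\<^sub>2" by (simp add: compatible_def)
  have "Hull r s T \<subseteq> ?T\<^sub>1"
    using transfer_system_threshold_ts saturated_threshold_ts \<open>T \<subseteq> ?T\<^sub>1\<close> by (rule Hull_least)
  moreover have "(x\<^sub>0, y) \<in> ?T\<^sub>2 - ?T\<^sub>1"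
    using v sub g by (simp add: threshold_ts_def threshold_ts_from_bottom_def)
  ultimately have "?T\<^sub>2 \<noteq> Hull r s T" by blast
  moreover have "(x\<^sub>1, y) \<in> complete_ts r s - ?T\<^sub>2"
    using v sub g by (simp add: complete_ts_def threshold_ts_from_bottom_def)
  then have "?T\<^sub>2 \<noteq> complete_ts r s" by blast
  ultimately show ?thesis
    using transfer_system_threshold_ts_from_bottom \<open>T \<subseteq> ?T\<^sub>2\<close> compat
    unfolding lesser_simply_paired_def by blast
qed

end

lemma fst_meet: "fst (meet x y) = min (fst x) (fst y)"
  and snd_meet: "snd (meet x y) = min (snd x) (snd y)"
  by (simp_all add: meet_def)

lemma Hset_eq: "k \<le> s \<Longrightarrow> Hset r k = {x \<in> verts r s. snd x \<le> k}"
  by (auto simp: Hset_def verts_def)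

lemma Vset_eq: "l \<le> r \<Longrightarrow> Vset l s = {x \<in> verts r s. fst x \<le> l}"
  by (auto simp: Vset_def verts_def)

theorem mainTheorem14:
  fixes r s :: nat and T :: "vtx rel"
  assumes "transfer_system r s T"
    and "card (components r s T) = 2"
    and "(\<exists>k. 0 < k \<and> k < s \<and> component r s T (0, 0) = Hset r k)
       \<or> (\<exists>l. 0 < l \<and> l < r \<and> component r s T (0, 0) = Vset l s)"
  shows "\<not> lesser_simply_paired r s T"
  using assms(3)
proof (elim disjE exE conjE)
  fix k assume "0 < k" "k < s" "component r s T (0, 0) = Hset r k"
  then have "component r s T (0, 0) = {x \<in> verts r s. snd x \<le> k}"
    by (simp add: Hset_eq)
  from not_lesser_simply_paired_if_component_threshold[OF snd_meet assms(1) this,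
      of "(0, 0)" "(0, 1)" "(0, s)"]
  show ?thesis using \<open>0 < k\<close> \<open>k < s\<close> by (simp add: verts_def sub_def)
next
  fix l assume "0 < l" "l < r" "component r s T (0, 0) = Vset l s"
  then have "component r s T (0, 0) = {x \<in> verts r s. fst x \<le> l}"
    by (simp add: Vset_eq)
  from not_lesser_simply_paired_if_component_threshold[OF fst_meet assms(1) this,
      of "(0, 0)" "(1, 0)" "(r, 0)"]
  show ?thesis using \<open>0 < l\<close> \<open>l < r\<close> by (simp add: verts_def sub_def)
qed

end
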